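(* Let $G$ be a finitely generated group with a left-invariant total order $\prec$, and let $Z$ be a finitely generated central subgroup of $G$ which is cofinal for $\prec$. Then $P_\prec=\{g\in G\mid 1\prec g\}$ is coarsely connected.
   Context: A subgroup $Z$ is cofinal for $\prec$ if for every $g\in G$ there exist $h_1,h_2\in Z$ with $h_1\prec g\prec h_2$. Coarse connectedness is with respect to the word metric $d_X$ of a finite generating set $X$: a subset $S$ is coarsely connected if there is $r\ge1$ such that any two elements of $S$ are joined by a sequence $s_0,\dots,s_n$ in $S$ with $d_X(s_i,s_{i+1})\le r$. *)

theory Defs
  imports "HOL-Algebra.Generated_Groups"
begin

definition word_length :: "('a, 'b) monoid_scheme \<Rightarrow> 'a set \<Rightarrow> 'a \<Rightarrow> nat" where
  "word_length G X x = (LEAST n. \<exists>ws. set ws \<subseteq> X \<union> (\<lambda>y. inv\<^bsub>G\<^esub> y) ` X \<and> length ws = n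
       \<and> foldr (\<lambda>a b. a \<otimes>\<^bsub>G\<^esub> b) ws \<one>\<^bsub>G\<^esub> = x)"

definition word_dist :: "('a, 'b) monoid_scheme \<Rightarrow> 'a set \<Rightarrow> 'a \<Rightarrow> 'a \<Rightarrow> nat" where
  "word_dist G X g h = word_length G X (inv\<^bsub>G\<^esub> g \<otimes>\<^bsub>G\<^esub> h)"

definition coarsely_connected :: "('a, 'b) monoid_scheme \<Rightarrow> 'a set \<Rightarrow> 'a set \<Rightarrow> bool" where
  "coarsely_connected G X S \<longleftrightarrow>
     (\<exists>r::nat. r \<ge> 1 \<and> (\<forall>a\<in>S. \<forall>b\<in>S. \<exists>ss. ss \<noteq> [] \<and> hd ss = a \<and> last ss = b \<and> set ss \<subseteq> S \<and>
        (\<forall>i. Suc i < length ss \<longrightarrow> word_dist G X (ss ! i) (ss ! Suc i) \<le> r)))"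

definition left_invariant_total_order :: "('a, 'b) monoid_scheme \<Rightarrow> ('a \<Rightarrow> 'a \<Rightarrow> bool) \<Rightarrow> bool" where
  "left_invariant_total_order G lt \<longleftrightarrow>
     (\<forall>x\<in>carrier G. \<not> lt x x) \<and>
     (\<forall>x\<in>carrier G. \<forall>y\<in>carrier G. \<forall>z\<in>carrier G. lt x y \<longrightarrow> lt y z \<longrightarrow> lt x z) \<and>
     (\<forall>x\<in>carrier G. \<forall>y\<in>carrier G. x = y \<or> lt x y \<or> lt y x) \<and>
     (\<forall>g\<in>carrier G. \<forall>x\<in>carrier G. \<forall>y\<in>carrier G. lt x y \<longrightarrow> lt (g \<otimes>\<^bsub>G\<^esub> x) (g \<otimes>\<^bsub>G\<^esub> y))"

definition cofinal :: "('a, 'b) monoid_scheme \<Rightarrow> ('a \<Rightarrow> 'a \<Rightarrow> bool) \<Rightarrow> 'a set \<Rightarrow> bool" where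
  "cofinal G lt Z \<longleftrightarrow> (\<forall>g\<in>carrier G. \<exists>h1\<in>Z. \<exists>h2\<in>Z. lt h1 g \<and> lt g h2)"

definition positive_cone :: "('a, 'b) monoid_scheme \<Rightarrow> ('a \<Rightarrow> 'a \<Rightarrow> bool) \<Rightarrow> 'a set" where
  "positive_cone G lt = {g \<in> carrier G. lt \<one>\<^bsub>G\<^esub> g}"

end

theory Submission
  imports Defs
begin

text \<open>Pick \<open>z \<in> Z\<close> above every generator of \<open>Z\<close> and its inverse. As \<open>z\<close> is central, every
element of \<open>Z\<close> lies below a power of \<open>z\<close>, so by cofinality of \<open>Z\<close> the powers of \<open>z\<close> are cofinal
in \<open>G\<close>; hence for each \<open>g\<close> the element \<open>z\<^sup>k g\<close> is positive for all large \<open>k\<close>. Multiplying by the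
central positive element \<open>z\<close> is a step of bounded length inside the positive cone. Given positive
\<open>a\<close>, \<open>b\<close>, write \<open>a\<inverse>b = w\<^sub>1\<cdots>w\<^sub>n\<close> with letters \<open>w\<^sub>i \<in> X\<^sup>\<plusminus>\<close> and choose \<open>k\<close> so large that all
\<open>z\<^sup>k a w\<^sub>1\<cdots>w\<^sub>i\<close> are positive: then \<open>a\<close> climbs to \<open>z\<^sup>k a\<close>, follows the word to \<open>z\<^sup>k b\<close> and
descends to \<open>b\<close>.\<close>

definition coarse_step :: "('a, 'b) monoid_scheme \<Rightarrow> 'a set \<Rightarrow> 'a set \<Rightarrow> nat \<Rightarrow> 'a \<Rightarrow> 'a \<Rightarrow> bool" where
  "coarse_step G X S r x y \<longleftrightarrow> x \<in> S \<and> y \<in> S \<and> word_dist G X x y \<le> r"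

lemma rtranclp_imp_path:
  assumes "R\<^sup>*\<^sup>* a b" "a \<in> P" "\<And>x y. R x y \<Longrightarrow> y \<in> P"
  shows "\<exists>ss. ss \<noteq> [] \<and> hd ss = a \<and> last ss = b \<and> set ss \<subseteq> P \<and>
           (\<forall>i. Suc i < length ss \<longrightarrow> R (ss ! i) (ss ! Suc i))"
  using assms(1,2)
proof (induction rule: converse_rtranclp_induct)
  case base
  then show ?case by (intro exI[of _ "[b]"]) auto
next
  case (step y z)
  then obtain ss where ss: "ss \<noteq> []" "hd ss = z" "last ss = b" "set ss \<subseteq> P"
    "\<forall>i. Suc i < length ss \<longrightarrow> R (ss ! i) (ss ! Suc i)"
    using assms(3) by blast
  have "R ((y # ss) ! i) ((y # ss) ! Suc i)" if "Suc i < length (y # ss)" for i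
    using ss step.hyps(1) that by (cases i) (auto simp: hd_conv_nth)
  then show ?case
    using ss step.prems by (intro exI[of _ "y # ss"]) auto
qed

lemma coarsely_connectedI:
  assumes "1 \<le> r" and "\<And>a b. a \<in> S \<Longrightarrow> b \<in> S \<Longrightarrow> (coarse_step G X S r)\<^sup>*\<^sup>* a b"
  shows "coarsely_connected G X S"
  unfolding coarsely_connected_def
proof (intro exI[of _ r] conjI ballI assms(1))
  fix a b assume "a \<in> S" "b \<in> S"
  from rtranclp_imp_path[OF assms(2)[OF this] \<open>a \<in> S\<close>]
  show "\<exists>ss. ss \<noteq> [] \<and> hd ss = a \<and> last ss = b \<and> set ss \<subseteq> S \<and>
          (\<forall>i. Suc i < length ss \<longrightarrow> word_dist G X (ss ! i) (ss ! Suc i) \<le> r)"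
    unfolding coarse_step_def by blast
qed

context group
begin

lemma word_length_letter:
  assumes "X \<subseteq> carrier G" "x \<in> X \<union> (\<lambda>y. inv y) ` X"
  shows "word_length G X x \<le> 1"
proof -
  have "x \<in> carrier G" using assms by auto
  then show ?thesis
    unfolding word_length_def by (intro Least_le exI[of _ "[x]"]) (use assms in auto)
qed

lemma word_dist_mult_letter:
  assumes "X \<subseteq> carrier G" "a \<in> carrier G" "x \<in> X \<union> (\<lambda>y. inv y) ` X"
  shows "word_dist G X a (a \<otimes> x) \<le> 1"
proof -
  have "x \<in> carrier G" using assms by auto
  then show ?thesis
    unfolding word_dist_def using assms word_length_letter by (simp add: m_assoc[symmetric])
qed

lemma word_dist_mult_central:
  assumes "z \<in> carrier G" "u \<in> carrier G" "z \<otimes> u = u \<otimes> z"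
  shows "word_dist G X u (z \<otimes> u) = word_length G X z"
  unfolding word_dist_def using assms by (simp add: m_assoc[symmetric])

end

locale left_ordered_group = group G for G (structure) +
  fixes lt :: "'a \<Rightarrow> 'a \<Rightarrow> bool"
  assumes left_invariant_total_order: "left_invariant_total_order G lt"
begin

abbreviation P :: "'a set" where "P \<equiv> positive_cone G lt"

lemma lt_trans: "lt x y \<Longrightarrow> lt y z \<Longrightarrow> x \<in> carrier G \<Longrightarrow> y \<in> carrier G \<Longrightarrow> z \<in> carrier G \<Longrightarrow> lt x z"
  using left_invariant_total_order unfolding left_invariant_total_order_def by blast

lemma lt_linear: "x \<in> carrier G \<Longrightarrow> y \<in> carrier G \<Longrightarrow> x \<noteq> y \<Longrightarrow> lt x y \<or> lt y x"
  using left_invariant_total_order unfolding left_invariant_total_order_def by blast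

lemma lt_mult_left: "lt x y \<Longrightarrow> g \<in> carrier G \<Longrightarrow> x \<in> carrier G \<Longrightarrow> y \<in> carrier G \<Longrightarrow> lt (g \<otimes> x) (g \<otimes> y)"
  using left_invariant_total_order unfolding left_invariant_total_order_def by blast

lemma positive_cone_mult: "x \<in> P \<Longrightarrow> y \<in> P \<Longrightarrow> x \<otimes> y \<in> P"
  using lt_mult_left[of \<one> y x] lt_trans[of \<one> x "x \<otimes> y"] by (auto simp: positive_cone_def)

lemma positive_cone_pow_mult: "z \<in> P \<Longrightarrow> w \<in> P \<Longrightarrow> z [^] (n::nat) \<otimes> w \<in> P"
proof (induction n)
  case (Suc n)
  have "z \<in> carrier G" "w \<in> carrier G" using Suc.prems by (auto simp: positive_cone_def)
  then have "z [^] Suc n \<otimes> w = z \<otimes> (z [^] n \<otimes> w)" by (metis nat_pow_Suc2 nat_pow_closed m_assoc)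
  then show ?case using Suc positive_cone_mult by simp
qed (auto simp: positive_cone_def)

lemma finite_strict_upper_bound:
  assumes "cofinal G lt Z" "Z \<subseteq> carrier G" "finite F" "F \<subseteq> carrier G"
  shows "\<exists>u\<in>Z. \<forall>s\<in>F. lt s u"
  using assms(3,4)
proof (induction F rule: finite_induct)
  case empty
  show ?case using assms(1) unfolding cofinal_def by blast
next
  case (insert t F)
  then obtain u where u: "u \<in> Z" "\<forall>s\<in>F. lt s u" by auto
  show ?case
  proof (cases "lt t u")
    case True
    then show ?thesis using u by auto
  next
    case False
    obtain v where v: "v \<in> Z" "lt t v" using assms(1) insert.prems unfolding cofinal_def by blast
    have "lt u t \<or> u = t" using False lt_linear[of t u] u(1) assms(2) insert.prems by blast
    then have "\<forall>s\<in>F. lt s v"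
      using u v lt_trans[of _ u t] lt_trans[of _ t v] assms(2) insert.prems by blast
    then show ?thesis using v by auto
  qed
qed

lemma generate_below_powers:
  assumes "z \<in> carrier G" "\<forall>g\<in>carrier G. z \<otimes> g = g \<otimes> z" "lt \<one> z"
    and "S \<subseteq> carrier G" "\<forall>s\<in>S. lt s z \<and> lt (inv s) z"
    and "h \<in> generate G S"
  shows "\<exists>m. lt h (z [^] (m::nat))"
  using assms(6)
proof (induction rule: generate.induct)
  case (eng h1 h2)
  obtain a b :: nat where ab: "lt h1 (z [^] a)" "lt h2 (z [^] b)" using eng.IH by blast
  have h: "h1 \<in> carrier G" "h2 \<in> carrier G"
    using eng.hyps generate_in_carrier assms(4) by auto
  have "lt (h1 \<otimes> h2) (h1 \<otimes> z [^] b)" using lt_mult_left[OF ab(2)] h assms(1) by simp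
  moreover have "h1 \<otimes> z [^] b = z [^] b \<otimes> h1"
    using group_commutes_pow assms(1,2) h by metis
  moreover have "lt (z [^] b \<otimes> h1) (z [^] b \<otimes> z [^] a)" using lt_mult_left[OF ab(1)] h assms(1) by simp
  ultimately have "lt (h1 \<otimes> h2) (z [^] (b + a))"
    using lt_trans h assms(1) by (simp add: nat_pow_mult)
  then show ?case by blast
qed (use assms in \<open>auto intro: exI[of _ "1::nat"]\<close>)

lemma central_positive_element_with_cofinal_powers:
  assumes "Z \<subseteq> carrier G" "\<forall>h\<in>Z. \<forall>g\<in>carrier G. h \<otimes> g = g \<otimes> h"
    and "finite S" "generate G S = Z" "cofinal G lt Z"
  obtains z where "z \<in> P" "\<forall>g\<in>carrier G. z \<otimes> g = g \<otimes> z"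
    "\<forall>y\<in>carrier G. \<exists>m. lt y (z [^] (m::nat))"
proof -
  have "S \<subseteq> generate G S" by (auto intro: generate.incl)
  then have S: "S \<subseteq> carrier G" using assms(1,4) by simp
  let ?F = "insert \<one> (S \<union> (\<lambda>s. inv s) ` S)"
  have "finite ?F" "?F \<subseteq> carrier G" using assms(3) S by auto
  then obtain z where z: "z \<in> Z" "\<forall>s\<in>?F. lt s z"
    using finite_strict_upper_bound[OF assms(5,1)] by blast
  have zG: "z \<in> carrier G" and z_central: "\<forall>g\<in>carrier G. z \<otimes> g = g \<otimes> z"
    using z(1) assms(1,2) by auto
  have z_pos: "lt \<one> z" and z_above: "\<forall>s\<in>S. lt s z \<and> lt (inv s) z" using z(2) by auto
  have "\<exists>m. lt y (z [^] (m::nat))" if y: "y \<in> carrier G" for y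
  proof -
    obtain h where h: "h \<in> Z" "lt y h" using assms(5) y unfolding cofinal_def by blast
    then obtain m :: nat where m: "lt h (z [^] m)"
      using generate_below_powers[OF zG z_central z_pos S z_above] assms(4) by blast
    have "h \<in> carrier G" using h(1) assms(1) by blast
    then have "lt y (z [^] m)" using lt_trans[OF h(2) m y] zG by simp
    then show ?thesis ..
  qed
  then show ?thesis using that z_central z_pos zG by (simp add: positive_cone_def)
qed

context
  fixes X z r
  assumes X: "X \<subseteq> carrier G" and z_pos: "z \<in> P"
    and z_central: "\<forall>g\<in>carrier G. z \<otimes> g = g \<otimes> z"
    and z_powers_cofinal: "\<forall>y\<in>carrier G. \<exists>m. lt y (z [^] (m::nat))"
    and r: "1 \<le> r" "word_length G X z \<le> r" "word_length G X (inv z) \<le> r"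
begin

lemma eventually_pow_mult_in_positive_cone:
  assumes "y \<in> carrier G"
  shows "\<forall>\<^sub>F k in sequentially. z [^] k \<otimes> y \<in> P"
proof -
  have z: "z \<in> carrier G" using z_pos by (simp add: positive_cone_def)
  obtain m :: nat where m: "lt (inv y) (z [^] m)" using z_powers_cofinal assms by blast
  have "lt (y \<otimes> inv y) (y \<otimes> z [^] m)" using lt_mult_left[OF m assms] assms z by simp
  moreover have "z \<otimes> y = y \<otimes> z" using z_central assms by blast
  then have "z [^] m \<otimes> y = y \<otimes> z [^] m" using group_commutes_pow z assms by blast
  ultimately have pos: "z [^] m \<otimes> y \<in> P" using assms z by (simp add: positive_cone_def)
  have "z [^] k \<otimes> y \<in> P" if "m \<le> k" for k
  proof -
    have "z [^] k \<otimes> y = z [^] (k - m) \<otimes> z [^] m \<otimes> y"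
      using that z by (simp add: nat_pow_mult)
    also have "\<dots> = z [^] (k - m) \<otimes> (z [^] m \<otimes> y)" using z assms by (simp add: m_assoc)
    finally show ?thesis using positive_cone_pow_mult[OF z_pos pos] by simp
  qed
  then show ?thesis unfolding eventually_sequentially by blast
qed

lemma coarse_step_mult_central:
  assumes "u \<in> P"
  shows "coarse_step G X P r u (z \<otimes> u)" "coarse_step G X P r (z \<otimes> u) u"
proof -
  have z: "z \<in> carrier G" and u: "u \<in> carrier G" using z_pos assms by (auto simp: positive_cone_def)
  have zu: "z \<otimes> u = u \<otimes> z" using z_central u by blast
  have left: "inv z \<otimes> (z \<otimes> u) = u" using z u by (simp add: m_assoc[symmetric])
  have right: "(z \<otimes> u) \<otimes> inv z = u" using z u by (simp add: zu m_assoc)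
  have "word_dist G X (z \<otimes> u) (inv z \<otimes> (z \<otimes> u)) = word_length G X (inv z)"
    by (rule word_dist_mult_central) (use z u left right in auto)
  then have "word_dist G X (z \<otimes> u) u = word_length G X (inv z)" by (simp only: left)
  moreover have "word_dist G X u (z \<otimes> u) = word_length G X z"
    using word_dist_mult_central[OF z u zu] .
  moreover have "z \<otimes> u \<in> P" using positive_cone_mult z_pos assms .
  ultimately show "coarse_step G X P r u (z \<otimes> u)" "coarse_step G X P r (z \<otimes> u) u"
    using assms r unfolding coarse_step_def by auto
qed

lemma rtranclp_coarse_step_pow_mult:
  fixes k :: nat
  assumes "w \<in> P"
  shows "(coarse_step G X P r)\<^sup>*\<^sup>* w (z [^] k \<otimes> w)" "(coarse_step G X P r)\<^sup>*\<^sup>* (z [^] k \<otimes> w) w"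
proof (induction k)
  case 0
  have "w \<in> carrier G" using assms by (simp add: positive_cone_def)
  then show "(coarse_step G X P r)\<^sup>*\<^sup>* w (z [^] (0::nat) \<otimes> w)"
    "(coarse_step G X P r)\<^sup>*\<^sup>* (z [^] (0::nat) \<otimes> w) w" by simp_all
next
  case (Suc k)
  have "z \<in> carrier G" "w \<in> carrier G" using z_pos assms by (auto simp: positive_cone_def)
  then have "z [^] Suc k \<otimes> w = z \<otimes> (z [^] k \<otimes> w)" by (metis nat_pow_Suc2 nat_pow_closed m_assoc)
  moreover have "z [^] k \<otimes> w \<in> P" using positive_cone_pow_mult z_pos assms .
  ultimately show "(coarse_step G X P r)\<^sup>*\<^sup>* w (z [^] Suc k \<otimes> w)"
    "(coarse_step G X P r)\<^sup>*\<^sup>* (z [^] Suc k \<otimes> w) w"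
    using Suc.IH coarse_step_mult_central
    by (auto intro: rtranclp.rtrancl_into_rtrancl converse_rtranclp_into_rtranclp)
qed

lemma eventually_coarse_step_letter:
  assumes "a \<in> carrier G" "x \<in> X \<union> (\<lambda>y. inv y) ` X"
  shows "\<forall>\<^sub>F k in sequentially. coarse_step G X P r (z [^] k \<otimes> a) (z [^] k \<otimes> a \<otimes> x)"
proof -
  have z: "z \<in> carrier G" and x: "x \<in> carrier G" using z_pos assms X by (auto simp: positive_cone_def)
  have "\<forall>\<^sub>F k in sequentially. z [^] k \<otimes> a \<in> P \<and> z [^] k \<otimes> (a \<otimes> x) \<in> P"
    using eventually_pow_mult_in_positive_cone assms(1) x by (simp add: eventually_conj)
  then show ?thesis
  proof eventually_elim
    case (elim k)
    have "word_dist G X (z [^] k \<otimes> a) (z [^] k \<otimes> a \<otimes> x) \<le> 1"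
      using word_dist_mult_letter X assms z by simp
    then show ?case using elim r z x assms(1) unfolding coarse_step_def by (simp add: m_assoc)
  qed
qed

lemma eventually_rtranclp_coarse_step_mult:
  assumes "g \<in> generate G X" "a \<in> carrier G"
  shows "\<forall>\<^sub>F k in sequentially. (coarse_step G X P r)\<^sup>*\<^sup>* (z [^] k \<otimes> a) (z [^] k \<otimes> a \<otimes> g)"
  using assms
proof (induction arbitrary: a rule: generate.induct)
  case one
  have "z \<in> carrier G" using z_pos by (simp add: positive_cone_def)
  then show ?case using one by simp
next
  case (incl h)
  then have "\<forall>\<^sub>F k in sequentially. coarse_step G X P r (z [^] k \<otimes> a) (z [^] k \<otimes> a \<otimes> h)"
    using eventually_coarse_step_letter by simp
  then show ?case by (rule eventually_mono) (rule r_into_rtranclp)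
next
  case (inv h)
  then have "\<forall>\<^sub>F k in sequentially. coarse_step G X P r (z [^] k \<otimes> a) (z [^] k \<otimes> a \<otimes> (inv h))"
    using eventually_coarse_step_letter by simp
  then show ?case by (rule eventually_mono) (rule r_into_rtranclp)
next
  case (eng h1 h2)
  have z: "z \<in> carrier G" using z_pos by (simp add: positive_cone_def)
  have h: "h1 \<in> carrier G" "h2 \<in> carrier G" using eng.hyps generate_in_carrier X by auto
  have "\<forall>\<^sub>F k in sequentially.
      (coarse_step G X P r)\<^sup>*\<^sup>* (z [^] k \<otimes> (a \<otimes> h1)) (z [^] k \<otimes> (a \<otimes> h1) \<otimes> h2)"
    using eng.IH(2) eng.prems h by simp
  with eng.IH(1)[OF eng.prems] show ?case
  proof eventually_elim
    case (elim k)
    then show ?case using z h eng.prems by (simp add: m_assoc)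
  qed
qed

lemma positive_cone_rtranclp_coarse_step:
  assumes "generate G X = carrier G" "a \<in> P" "b \<in> P"
  shows "(coarse_step G X P r)\<^sup>*\<^sup>* a b"
proof -
  have a: "a \<in> carrier G" and b: "b \<in> carrier G" using assms(2,3) by (auto simp: positive_cone_def)
  then have "a \<otimes> (inv a \<otimes> b) = b" by (simp add: m_assoc[symmetric])
  moreover have "\<forall>\<^sub>F k in sequentially.
      (coarse_step G X P r)\<^sup>*\<^sup>* (z [^] k \<otimes> a) (z [^] k \<otimes> a \<otimes> (inv a \<otimes> b))"
    using eventually_rtranclp_coarse_step_mult assms(1) a b by simp
  ultimately obtain k :: nat where "(coarse_step G X P r)\<^sup>*\<^sup>* (z [^] k \<otimes> a) (z [^] k \<otimes> b)"
    using z_pos a b unfolding eventually_sequentially by (auto simp: positive_cone_def m_assoc)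
  then show ?thesis
    using rtranclp_coarse_step_pow_mult assms(2,3) by (meson rtranclp_trans)
qed

end

lemma coarsely_connected_positive_cone:
  assumes "X \<subseteq> carrier G" "generate G X = carrier G" "z \<in> P"
    and "\<forall>g\<in>carrier G. z \<otimes> g = g \<otimes> z" "\<forall>y\<in>carrier G. \<exists>m. lt y (z [^] (m::nat))"
  shows "coarsely_connected G X P"
proof -
  define r where "r = max 1 (max (word_length G X z) (word_length G X (inv z)))"
  have "1 \<le> r" "word_length G X z \<le> r" "word_length G X (inv z) \<le> r" unfolding r_def by auto
  then show ?thesis
    using coarsely_connectedI positive_cone_rtranclp_coarse_step[OF assms(1,3-5)] assms(2) by metis
qed

end

theorem lemma4p14:
  fixes G :: "('a, 'b) monoid_scheme" and lt :: "'a \<Rightarrow> 'a \<Rightarrow> bool"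
    and Z :: "'a set" and X :: "'a set"
  assumes "group G"
    and "left_invariant_total_order G lt"
    and "subgroup Z G"
    and "\<forall>z\<in>Z. \<forall>g\<in>carrier G. z \<otimes>\<^bsub>G\<^esub> g = g \<otimes>\<^bsub>G\<^esub> z"
    and "\<exists>S. finite S \<and> S \<subseteq> Z \<and> generate G S = Z"
    and "cofinal G lt Z"
    and "finite X" and "X \<subseteq> carrier G" and "generate G X = carrier G"
  shows "coarsely_connected G X (positive_cone G lt)"
proof -
  interpret left_ordered_group G lt
    using assms(1,2) by (simp add: left_ordered_group_def left_ordered_group_axioms_def)
  obtain S where "finite S" "generate G S = Z" using assms(5) by blast
  then obtain z where "z \<in> positive_cone G lt" "\<forall>g\<in>carrier G. z \<otimes>\<^bsub>G\<^esub> g = g \<otimes>\<^bsub>G\<^esub> z"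
      "\<forall>y\<in>carrier G. \<exists>m. lt y (z [^]\<^bsub>G\<^esub> (m::nat))"
    using central_positive_element_with_cofinal_powers subgroup.subset[OF assms(3)] assms(4,6)
    by metis
  then show ?thesis using coarsely_connected_positive_cone assms(8,9) by blast
qed

end
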